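(* Let $f,g:\Theta\times Y\to\mathbb{R}$ be test quantities such that for all $y\in Y$ and $\theta_1,\theta_2\in\Theta$: $g(\theta_1,y)<g(\theta_2,y)\iff f(\theta_1,y)<f(\theta_2,y)$ and $g(\theta_1,y)=g(\theta_2,y)\iff f(\theta_1,y)=f(\theta_2,y)$, and let $\phi$ be a posterior family. Then for all $y\in Y$, $\tilde\theta\in\Theta$, $x\in[0,1]$, $M\in\mathbb{N}$ and $i\in\{0,\dots,M\}$: $r_{\phi,f}(x\mid\tilde\theta,y)=r_{\phi,g}(x\mid\tilde\theta,y)$ and $R_{\phi,f}(i\mid\tilde\theta,y)=R_{\phi,g}(i\mid\tilde\theta,y)$.
   Context: Data space $Y$, parameter space $\Theta$. A posterior family is $\phi:\Theta\times Y\to\mathbb{R}^+$ with $\int_\Theta\phi(\theta\mid y)\,\mathrm{d}\theta=1$ for all $y$; a test quantity is a measurable $f:\Theta\times Y\to\mathbb{R}$. $C_{\phi,f}(s\mid y)=\int_\Theta\mathbb{I}[f(\theta,y)\le s]\phi(\theta\mid y)\,\mathrm{d}\theta$, $D_{\phi,f}(s\mid y)=\int_\Theta\mathbb{I}[f(\theta,y)=s]\phi(\theta\mid y)\,\mathrm{d}\theta$; with $U\sim\mathrm{uniform}[0,1]$, $r_{\phi,f}(x\mid\tilde\theta,y)=\Pr\big(C_{\phi,f}(f(\tilde\theta,y)\mid y)-U\,D_{\phi,f}(f(\tilde\theta,y)\mid y)\le x\big)$. For $M\in\mathbb{N}$, with $\theta_1,\dots,\theta_M$ i.i.d. from $\phi(\cdot\mid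 y)$: $N^{\mathtt{less}}=\sum_m\mathbb{I}[f(\theta_m,y)<f(\tilde\theta,y)]$, $N^{\mathtt{equals}}=\sum_m\mathbb{I}[f(\theta_m,y)=f(\tilde\theta,y)]$, $K$ uniform on $\{0,\dots,N^{\mathtt{equals}}\}$, $N^{\mathtt{total}}=N^{\mathtt{less}}+K$, and $R_{\phi,f}(i\mid\tilde\theta,y)=\Pr(N^{\mathtt{total}}\le i)$. *)

theory Defs
  imports "HOL-Probability.Probability"
begin

definition posterior_family :: "'a measure \<Rightarrow> 'b measure \<Rightarrow> ('a \<Rightarrow> 'b \<Rightarrow> real) \<Rightarrow> bool" where
  "posterior_family MT MY phi \<longleftrightarrow>
     (\<forall>y\<in>space MY. (\<forall>t\<in>space MT. 0 \<le> phi t y)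
        \<and> (\<lambda>t. phi t y) \<in> borel_measurable MT
        \<and> (\<integral>\<^sup>+ t. ennreal (phi t y) \<partial>MT) = 1)"

definition test_quantity :: "'a measure \<Rightarrow> 'b measure \<Rightarrow> ('a \<Rightarrow> 'b \<Rightarrow> real) \<Rightarrow> bool" where
  "test_quantity MT MY f \<longleftrightarrow> (\<lambda>(t, y). f t y) \<in> borel_measurable (MT \<Otimes>\<^sub>M MY)"

definition C_fun :: "'a measure \<Rightarrow> ('a \<Rightarrow> 'b \<Rightarrow> real) \<Rightarrow> ('a \<Rightarrow> 'b \<Rightarrow> real) \<Rightarrow> real \<Rightarrow> 'b \<Rightarrow> real" where
  "C_fun MT phi f s y = (\<integral> t. indicator {t. f t y \<le> s} t * phi t y \<partial>MT)"

definition D_fun :: "'a measure \<Rightarrow> ('a \<Rightarrow> 'b \<Rightarrow> real) \<Rightarrow> ('a \<Rightarrow> 'b \<Rightarrow> real) \<Rightarrow> real \<Rightarrow> 'b \<Rightarrow> real" where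
  "D_fun MT phi f s y = (\<integral> t. indicator {t. f t y = s} t * phi t y \<partial>MT)"

definition r_fun :: "'a measure \<Rightarrow> ('a \<Rightarrow> 'b \<Rightarrow> real) \<Rightarrow> ('a \<Rightarrow> 'b \<Rightarrow> real) \<Rightarrow> real \<Rightarrow> 'a \<Rightarrow> 'b \<Rightarrow> real" where
  "r_fun MT phi f x th y =
     measure (uniform_measure lborel {0..1::real})
       {u. C_fun MT phi f (f th y) y - u * D_fun MT phi f (f th y) y \<le> x}"

definition post_measure :: "'a measure \<Rightarrow> ('a \<Rightarrow> 'b \<Rightarrow> real) \<Rightarrow> 'b \<Rightarrow> 'a measure" where
  "post_measure MT phi y = density MT (\<lambda>t. ennreal (phi t y))"

definition N_less :: "('a \<Rightarrow> 'b \<Rightarrow> real) \<Rightarrow> nat \<Rightarrow> 'a \<Rightarrow> 'b \<Rightarrow> (nat \<Rightarrow> 'a) \<Rightarrow> nat" where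
  "N_less f M th y \<omega> = card {m\<in>{..<M}. f (\<omega> m) y < f th y}"

definition N_equals :: "('a \<Rightarrow> 'b \<Rightarrow> real) \<Rightarrow> nat \<Rightarrow> 'a \<Rightarrow> 'b \<Rightarrow> (nat \<Rightarrow> 'a) \<Rightarrow> nat" where
  "N_equals f M th y \<omega> = card {m\<in>{..<M}. f (\<omega> m) y = f th y}"

text \<open>R(i | theta~, y) = Pr(N_less + K \<le> i), where given the draws K is uniform on
  {0..N_equals}; computed as the expectation over the draws of the conditional probability.\<close>
definition R_fun :: "'a measure \<Rightarrow> ('a \<Rightarrow> 'b \<Rightarrow> real) \<Rightarrow> ('a \<Rightarrow> 'b \<Rightarrow> real) \<Rightarrow> nat \<Rightarrow> nat \<Rightarrow> 'a \<Rightarrow> 'b \<Rightarrow> real" where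
  "R_fun MT phi f M i th y =
     (\<integral> \<omega>. measure (measure_pmf (pmf_of_set {0..N_equals f M th y \<omega>}))
              {k. N_less f M th y \<omega> + k \<le> i}
        \<partial>(PiM {..<M} (\<lambda>_. post_measure MT phi y)))"

end

theory Submission
  imports Defs
begin

text \<open>All quantities involved depend on the test quantity only through comparisons of its values
  with the value at \<open>\<theta>\<close>, so two test quantities inducing the same strict order and the same ties
  give identical rank distributions.\<close>

lemma C_fun_cong:
  assumes "\<And>t. t \<in> space MT \<Longrightarrow> f t y \<le> s \<longleftrightarrow> g t y \<le> s'"
  shows "C_fun MT phi f s y = C_fun MT phi g s' y"
  unfolding C_fun_def
  by (rule Bochner_Integration.integral_cong) (auto simp: indicator_def assms)

lemma D_fun_cong:
  assumes "\<And>t. t \<in> space MT \<Longrightarrow> f t y = s \<longleftrightarrow> g t y = s'"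
  shows "D_fun MT phi f s y = D_fun MT phi g s' y"
  unfolding D_fun_def
  by (rule Bochner_Integration.integral_cong) (auto simp: indicator_def assms)

lemma r_fun_cong:
  assumes less: "\<And>t. t \<in> space MT \<Longrightarrow> f t y < f th y \<longleftrightarrow> g t y < g th y"
    and eq: "\<And>t. t \<in> space MT \<Longrightarrow> f t y = f th y \<longleftrightarrow> g t y = g th y"
  shows "r_fun MT phi f x th y = r_fun MT phi g x th y"
proof -
  have "C_fun MT phi f (f th y) y = C_fun MT phi g (g th y) y"
    by (rule C_fun_cong) (simp add: le_less less eq)
  moreover have "D_fun MT phi f (f th y) y = D_fun MT phi g (g th y) y"
    by (rule D_fun_cong) (rule eq)
  ultimately show ?thesis
    unfolding r_fun_def by simp
qed

lemma N_less_cong: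
  assumes "\<And>m. m < M \<Longrightarrow> f (\<omega> m) y < f th y \<longleftrightarrow> g (\<omega> m) y < g th y"
  shows "N_less f M th y \<omega> = N_less g M th y \<omega>"
  unfolding N_less_def by (rule arg_cong[where f = card]) (auto simp: assms)

lemma N_equals_cong:
  assumes "\<And>m. m < M \<Longrightarrow> f (\<omega> m) y = f th y \<longleftrightarrow> g (\<omega> m) y = g th y"
  shows "N_equals f M th y \<omega> = N_equals g M th y \<omega>"
  unfolding N_equals_def by (rule arg_cong[where f = card]) (auto simp: assms)

lemma draw_in_space:
  assumes "\<omega> \<in> space (PiM {..<M} (\<lambda>_. post_measure MT phi y))" and "m < M"
  shows "\<omega> m \<in> space MT"
  using assms by (auto simp: space_PiM post_measure_def)

lemma R_fun_cong:
  assumes less: "\<And>t. t \<in> space MT \<Longrightarrow> f t y < f th y \<longleftrightarrow> g t y < g th y"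
    and eq: "\<And>t. t \<in> space MT \<Longrightarrow> f t y = f th y \<longleftrightarrow> g t y = g th y"
  shows "R_fun MT phi f M i th y = R_fun MT phi g M i th y"
  unfolding R_fun_def
proof (rule Bochner_Integration.integral_cong[OF refl])
  fix \<omega> assume "\<omega> \<in> space (PiM {..<M} (\<lambda>_. post_measure MT phi y))"
  then have draws: "\<And>m. m < M \<Longrightarrow> \<omega> m \<in> space MT"
    by (rule draw_in_space)
  have "N_less f M th y \<omega> = N_less g M th y \<omega>"
    by (rule N_less_cong) (simp add: less draws)
  moreover have "N_equals f M th y \<omega> = N_equals g M th y \<omega>"
    by (rule N_equals_cong) (simp add: eq draws)
  ultimately show "measure (pmf_of_set {0..N_equals f M th y \<omega>}) {k. N_less f M th y \<omega> + k \<le> i} =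
      measure (pmf_of_set {0..N_equals g M th y \<omega>}) {k. N_less g M th y \<omega> + k \<le> i}"
    by simp
qed

theorem mainTheorem14:
  fixes MT :: "'a measure" and MY :: "'b measure"
    and f g phi :: "'a \<Rightarrow> 'b \<Rightarrow> real"
  assumes "test_quantity MT MY f" and "test_quantity MT MY g"
    and "\<And>y t1 t2. y \<in> space MY \<Longrightarrow> t1 \<in> space MT \<Longrightarrow> t2 \<in> space MT \<Longrightarrow>
            (g t1 y < g t2 y \<longleftrightarrow> f t1 y < f t2 y) \<and> (g t1 y = g t2 y \<longleftrightarrow> f t1 y = f t2 y)"
    and "posterior_family MT MY phi"
  shows "\<forall>y\<in>space MY. \<forall>th\<in>space MT. \<forall>x\<in>{0..1::real}. \<forall>M::nat. \<forall>i\<in>{0..M}.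
           r_fun MT phi f x th y = r_fun MT phi g x th y
         \<and> R_fun MT phi f M i th y = R_fun MT phi g M i th y"
proof (intro ballI allI)
  fix y th x M i
  assume y: "y \<in> space MY" and th: "th \<in> space MT"
  have less: "f t y < f th y \<longleftrightarrow> g t y < g th y"
    and eq: "f t y = f th y \<longleftrightarrow> g t y = g th y" if "t \<in> space MT" for t
    using assms(3)[OF y that th] by simp_all
  show "r_fun MT phi f x th y = r_fun MT phi g x th y
      \<and> R_fun MT phi f M i th y = R_fun MT phi g M i th y"
    by (intro conjI r_fun_cong[where f = f and g = g, OF less eq]
        R_fun_cong[where f = f and g = g, OF less eq])
qed

end
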